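(* Let $\Omega\subset\mathbb{P}(\mathbb{R}^d)$ be a properly convex domain, $\mathcal{C}\subset\Omega$ a non-empty closed convex subset, and $G\le\mathrm{Stab}_\Omega(\mathcal{C})$ a subgroup acting co-compactly on $\mathcal{C}$. If $x\in\partial_i\mathcal{C}$, then there exists a non-zero $T\in\overline{G}^{\mathrm{End}}$ such that (1) $\mathbb{P}(\ker T)\cap\Omega=\emptyset$, (2) $T(\Omega)=F_\Omega(x)$, and (3) $T(\mathcal{C})=F_\Omega(x)\cap\partial_i\mathcal{C}$, where for $p=[v]\in\Omega$ we write $T(p)=[Tv]$.
   Context: Properly convex domain: open subset of $\mathbb{P}(\mathbb{R}^d)$ which is a bounded convex set in some affine chart. $\mathrm{Stab}_\Omega(X)=\{g\in\mathrm{Aut}(\Omega):gX=X\}$. For $G\le\mathrm{PGL}_d(\mathbb{R})$, $\overline{G}^{\mathrm{End}}$ is the closure in $\mathrm{End}(\mathbb{R}^d)$ of $\{g\in\mathrm{GL}_d(\mathbb{R}):[g]\in G\}$. For a convex set $C$: $\mathrm{relint}(C)$ is its interior in the projective span, $\partial C=\overline{C}\setminus\mathrm{relint}(C)$, and the ideal boundary is $\partial_i C=\partial C\setminus C$. Open face: $F_\Omega(x)=\{x\}\cup\{y\in\overline{\Omega}:\exists$ an open line segment in $\overline{\Omega}$ containing $x$ and $y\}$. Co-compact: there is a compact $K\subset\mathcal{C}$ with $G\cdot K=\mathcal{C}$. *)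

theory Defs
  imports "HOL-Analysis.Analysis"
begin

text \<open>A point of the projective space P(R^d) is represented by any
nonzero vector of real^'n (d = CARD('n)); a subset of P(R^d) is represented by its
cone of representatives, i.e. a set of nonzero vectors closed under nonzero scaling.\<close>

definition proj_set :: "(real^'n) set \<Rightarrow> bool" where
  "proj_set S \<longleftrightarrow> 0 \<notin> S \<and> (\<forall>v\<in>S. \<forall>c. c \<noteq> 0 \<longrightarrow> c *\<^sub>R v \<in> S)"

definition chart :: "(real^'n \<Rightarrow> real) \<Rightarrow> real^'n \<Rightarrow> real^'n" where
  "chart f v = (1 / f v) *\<^sub>R v"

definition in_chart :: "(real^'n \<Rightarrow> real) \<Rightarrow> (real^'n) set \<Rightarrow> bool" where
  "in_chart f S \<longleftrightarrow> linear f \<and> (\<forall>v\<in>S. f v \<noteq> 0)"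

definition properly_convex_domain :: "(real^'n) set \<Rightarrow> bool" where
  "properly_convex_domain \<Omega> \<longleftrightarrow> proj_set \<Omega> \<and> open \<Omega> \<and>
     (\<exists>f. in_chart f \<Omega> \<and> bounded (chart f ` \<Omega>) \<and> convex (chart f ` \<Omega>))"

definition proj_convex :: "(real^'n) set \<Rightarrow> bool" where
  "proj_convex S \<longleftrightarrow> proj_set S \<and> (\<exists>f. in_chart f S \<and> convex (chart f ` S))"

text \<open>Closure in P(R^d) (the projection R^d - 0 \<rightarrow> P is an open quotient map).\<close>
definition proj_closure :: "(real^'n) set \<Rightarrow> (real^'n) set" where
  "proj_closure S = closure S - {0}"

text \<open>relint(C): interior of C in its projective span. For a cone S the affine hull of
S equals its linear span, so this is the relative interior.\<close>
definition proj_relint :: "(real^'n) set \<Rightarrow> (real^'n) set" where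
  "proj_relint S = rel_interior S"

definition proj_boundary :: "(real^'n) set \<Rightarrow> (real^'n) set" where
  "proj_boundary S = proj_closure S - proj_relint S"

definition ideal_boundary :: "(real^'n) set \<Rightarrow> (real^'n) set" where
  "ideal_boundary S = proj_boundary S - S"

definition proj_open_segment :: "real^'n \<Rightarrow> real^'n \<Rightarrow> (real^'n) set" where
  "proj_open_segment a b =
     {c *\<^sub>R (s *\<^sub>R a + t *\<^sub>R b) | c s t. c \<noteq> 0 \<and> s > 0 \<and> t > 0}"

definition open_face :: "(real^'n) set \<Rightarrow> real^'n \<Rightarrow> (real^'n) set" where
  "open_face \<Omega> x = {c *\<^sub>R x | c. c \<noteq> 0} \<union>
     {y \<in> proj_closure \<Omega>. \<exists>a b. proj_open_segment a b \<subseteq> proj_closure \<Omega> \<and>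
         x \<in> proj_open_segment a b \<and> y \<in> proj_open_segment a b}"

text \<open>A subgroup G of PGL_d(R), represented by its full preimage in GL_d(R).\<close>
definition pgl_subgroup :: "(real^'n^'n) set \<Rightarrow> bool" where
  "pgl_subgroup G \<longleftrightarrow> (\<forall>g\<in>G. invertible g) \<and> mat 1 \<in> G \<and>
     (\<forall>g\<in>G. \<forall>h\<in>G. g ** h \<in> G) \<and> (\<forall>g\<in>G. matrix_inv g \<in> G) \<and>
     (\<forall>g\<in>G. \<forall>c. c \<noteq> 0 \<longrightarrow> c *\<^sub>R g \<in> G)"

definition in_stab :: "(real^'n^'n) set \<Rightarrow> (real^'n) set \<Rightarrow> (real^'n) set \<Rightarrow> bool" where
  "in_stab G \<Omega> X \<longleftrightarrow> pgl_subgroup G \<and>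
     (\<forall>g\<in>G. (\<lambda>v. g *v v) ` \<Omega> = \<Omega> \<and> (\<lambda>v. g *v v) ` X = X)"

text \<open>Co-compact action: a compact K \<subseteq> C (in P(R^d), given by a compact set of
representatives) with G K = C.\<close>
definition cocompact :: "(real^'n^'n) set \<Rightarrow> (real^'n) set \<Rightarrow> bool" where
  "cocompact G C \<longleftrightarrow> (\<exists>K. compact K \<and> K \<subseteq> C \<and>
      C = {g *v k | g k. g \<in> G \<and> k \<in> K})"

end

theory Submission
  imports Defs
begin

text \<open>
  Lift \<open>\<Omega>\<close> to the open convex cone \<open>D\<close> on which the functional \<open>f\<close> of a bounded chart is positive;
  boundedness of the chart makes \<open>closure D\<close> pointed. Choose \<open>p \<in> C \<inter> D\<close> and points
  \<open>c\<^sub>n \<rightarrow> x\<close> on the segment from \<open>p\<close> to \<open>x\<close>. Cocompactness writes \<open>c\<^sub>n = h\<^sub>n \<kappa>\<^sub>n\<close> with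
  \<open>h\<^sub>n \<in> G\<close> preserving \<open>D\<close> and \<open>\<kappa>\<^sub>n\<close> in a compact part of \<open>C\<close>; a subsequence of the
  normalised \<open>h\<^sub>n\<close> converges to some \<open>T \<noteq> 0\<close> with \<open>T k = \<rho> x\<close>, \<open>\<rho> > 0\<close>, where \<open>k \<in> D\<close> is
  the limit of the \<open>\<kappa>\<^sub>n\<close>. As \<open>T D \<subseteq> closure D\<close>, \<open>D\<close> is open and \<open>closure D\<close> is pointed, \<open>T\<close> does
  not vanish on \<open>D\<close> and maps segments of \<open>\<Omega>\<close> through \<open>k\<close> to segments of \<open>closure \<Omega>\<close>
  through \<open>x\<close>, so \<open>T \<Omega> \<subseteq> F\<^sub>\<Omega>(x)\<close>. Conversely, up to scaling every point \<open>y\<close> of \<open>F\<^sub>\<Omega>(x)\<close> is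
  comparable with \<open>x\<close> in the cone \<open>closure D\<close>; then the preimages under \<open>h\<^sub>n\<close> of the points
  of the segment from \<open>p\<close> to \<open>y\<close> are comparable with \<open>\<kappa>\<^sub>n\<close> uniformly in \<open>n\<close>, so they accumulate at some
  \<open>u \<in> D\<close> with \<open>T u = \<rho> y\<close>, and \<open>u \<in> C\<close> when \<open>y \<in> closure C\<close>. Since \<open>x \<notin> \<Omega>\<close>, the whole
  face avoids \<open>\<Omega>\<close>, which identifies \<open>T C\<close> with \<open>F\<^sub>\<Omega>(x) \<inter> \<partial>\<^sub>i C\<close>.
\<close>

lemma tendsto_matrix_vector_mult:
  fixes A :: "'a \<Rightarrow> real^'n^'m" and u :: "'a \<Rightarrow> real^'n"
  assumes "(A \<longlongrightarrow> T) F" "(u \<longlongrightarrow> v) F"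
  shows "((\<lambda>n. A n *v u n) \<longlongrightarrow> T *v v) F"
  unfolding matrix_vector_mult_def
  by (intro vec_tendstoI) (auto intro!: tendsto_sum tendsto_mult tendsto_vec_nth assms)

lemma matrix_inv_cancel:
  fixes g :: "real^'n^'n"
  assumes "invertible g"
  shows "matrix_inv g *v (g *v v) = v" "g *v (matrix_inv g *v v) = v"
proof -
  have "\<exists>A'. g ** A' = mat 1 \<and> A' ** g = mat 1" using assms unfolding invertible_def by blast
  hence "g ** matrix_inv g = mat 1 \<and> matrix_inv g ** g = mat 1"
    unfolding matrix_inv_def by (rule someI_ex)
  thus "matrix_inv g *v (g *v v) = v" "g *v (matrix_inv g *v v) = v"
    by (simp_all add: matrix_vector_mul_assoc)
qed

lemma open_contains_line_nbhd:
  fixes S :: "'a::real_normed_vector set"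
  assumes "open S" "v \<in> S"
  obtains e where "e > 0" "\<And>d. \<bar>d\<bar> < e \<Longrightarrow> v + d *\<^sub>R w \<in> S"
proof -
  obtain r where r: "r > 0" "ball v r \<subseteq> S" using assms open_contains_ball by blast
  have "v + d *\<^sub>R w \<in> S" if "\<bar>d\<bar> < r / (norm w + 1)" for d
  proof -
    have "\<bar>d\<bar> * norm w \<le> \<bar>d\<bar> * (norm w + 1)" by (simp add: mult_left_mono)
    also have "\<dots> < r" using that by (simp add: less_divide_eq add_nonneg_pos)
    finally show ?thesis using r by (auto simp: dist_norm)
  qed
  moreover have "r / (norm w + 1) > 0" using r by (simp add: add_nonneg_pos)
  ultimately show thesis using that by blast
qed

lemma mem_uminus_image: "v \<in> uminus ` A \<longleftrightarrow> - v \<in> (A :: 'a::group_add set)"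
  by (force simp: image_iff)

lemma proj_open_segment_memI:
  "0 < s \<Longrightarrow> 0 < t \<Longrightarrow> c \<noteq> 0 \<Longrightarrow> c *\<^sub>R (s *\<^sub>R a + t *\<^sub>R b) \<in> proj_open_segment a b"
  unfolding proj_open_segment_def by blast

lemma proj_open_segment_scaleR:
  assumes "z \<in> proj_open_segment a b" "c \<noteq> 0"
  shows "c *\<^sub>R z \<in> proj_open_segment a b"
proof -
  obtain c' s t where "z = c' *\<^sub>R (s *\<^sub>R a + t *\<^sub>R b)" "c' \<noteq> 0" "0 < s" "0 < t"
    using assms(1) unfolding proj_open_segment_def by blast
  thus ?thesis using proj_open_segment_memI[of s t "c * c'"] assms(2) by simp
qed

lemma proj_open_segment_uminus: "proj_open_segment (- a) (- b) = proj_open_segment a b"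
proof -
  have "proj_open_segment (- a) (- b) \<subseteq> proj_open_segment a b" for a b :: "real^'n"
  proof
    fix z assume "z \<in> proj_open_segment (- a) (- b)"
    then obtain c s t where "z = c *\<^sub>R (s *\<^sub>R (- a) + t *\<^sub>R (- b))" "c \<noteq> 0" "0 < s" "0 < t"
      unfolding proj_open_segment_def by blast
    moreover from this have "z = (- c) *\<^sub>R (s *\<^sub>R a + t *\<^sub>R b)" by (simp add: algebra_simps)
    ultimately show "z \<in> proj_open_segment a b" using proj_open_segment_memI[of s t "- c" a b] by simp
  qed
  from this[of a b] this[of "- a" "- b"] show ?thesis by auto
qed

lemma proj_open_segment_image:
  "(\<lambda>v. T *v v) ` proj_open_segment a b = proj_open_segment (T *v a) (T *v b)"
proof
  show "(\<lambda>v. T *v v) ` proj_open_segment a b \<subseteq> proj_open_segment (T *v a) (T *v b)"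
    unfolding proj_open_segment_def
    by (auto simp: matrix_vector_right_distrib matrix_vector_mult_scaleR) blast
  show "proj_open_segment (T *v a) (T *v b) \<subseteq> (\<lambda>v. T *v v) ` proj_open_segment a b"
  proof
    fix z assume "z \<in> proj_open_segment (T *v a) (T *v b)"
    then obtain c s t where z: "z = c *\<^sub>R (s *\<^sub>R (T *v a) + t *\<^sub>R (T *v b))" "c \<noteq> 0" "0 < s" "0 < t"
      unfolding proj_open_segment_def by blast
    hence "z = T *v (c *\<^sub>R (s *\<^sub>R a + t *\<^sub>R b))"
      by (simp add: matrix_vector_right_distrib matrix_vector_mult_scaleR)
    thus "z \<in> (\<lambda>v. T *v v) ` proj_open_segment a b" using z proj_open_segment_memI by blast
  qed
qed

lemma open_face_uminus: "open_face \<Omega> (- x) = open_face \<Omega> x"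
proof -
  have "{c *\<^sub>R (- x) | c. c \<noteq> 0} = {c *\<^sub>R x | c. c \<noteq> 0}"
    by (auto; rule_tac x = "- c" in exI; simp)
  moreover have "- x \<in> proj_open_segment a b \<longleftrightarrow> x \<in> proj_open_segment a b" for a b
    using proj_open_segment_scaleR[of "- x" a b "-1"] proj_open_segment_scaleR[of x a b "-1"] by auto
  ultimately show ?thesis unfolding open_face_def by simp
qed

lemma proj_set_chart_convex_add:
  fixes S :: "(real^'n) set"
  assumes S: "proj_set S" "linear f" "\<And>v. v \<in> S \<Longrightarrow> f v \<noteq> 0" "convex (chart f ` S)"
    and uv: "u \<in> S" "v \<in> S" "0 < f u * f v"
  shows "u + v \<in> S"
proof -
  have sum: "f u + f v \<noteq> 0" "f (u + v) = f u + f v" using uv(3) S(2)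
    by (auto simp: zero_less_mult_iff linear_add)
  define l where "l = f u / (f u + f v)"
  have "0 \<le> l" "l \<le> 1" using uv(3) by (auto simp: l_def zero_less_mult_iff field_simps)
  hence "l *\<^sub>R chart f u + (1 - l) *\<^sub>R chart f v \<in> chart f ` S"
    using uv by (intro convexD[OF S(4)]) auto
  moreover have "l *\<^sub>R chart f u + (1 - l) *\<^sub>R chart f v = (1 / (f u + f v)) *\<^sub>R (u + v)"
    using sum uv S(3) by (simp add: chart_def l_def field_simps scaleR_add_right)
  ultimately obtain w where w: "w \<in> S" "(1 / (f u + f v)) *\<^sub>R (u + v) = (1 / f w) *\<^sub>R w"
    by (auto simp: chart_def)
  hence "(f u + f v) *\<^sub>R ((1 / (f u + f v)) *\<^sub>R (u + v)) = (f u + f v) *\<^sub>R ((1 / f w) *\<^sub>R w)"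
    by simp
  hence "u + v = ((f u + f v) / f w) *\<^sub>R w" using sum by simp
  moreover have "(f u + f v) / f w \<noteq> 0" using sum S(3) w by auto
  ultimately show ?thesis using S(1) w(1) unfolding proj_set_def by metis
qed

section \<open>The cone over a properly convex domain\<close>

locale properly_convex_chart =
  fixes \<Omega> :: "(real^'n) set" and f :: "real^'n \<Rightarrow> real"
  assumes proj_set_\<Omega>: "proj_set \<Omega>" and open_\<Omega>: "open \<Omega>" and linear_f: "linear f"
    and f_nonzero: "\<And>v. v \<in> \<Omega> \<Longrightarrow> f v \<noteq> 0"
    and bounded_chart: "bounded (chart f ` \<Omega>)" and convex_chart: "convex (chart f ` \<Omega>)"
begin

definition D :: "(real^'n) set" where "D = {v \<in> \<Omega>. 0 < f v}"

lemmas f_linear_simps [simp] =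
  linear_add[OF linear_f] linear_scale[OF linear_f] linear_neg[OF linear_f] linear_diff[OF linear_f]

lemma continuous_on_f: "continuous_on S f"
  using linear_f linear_conv_bounded_linear linear_continuous_on by blast

lemma scaleR_in_\<Omega>: "v \<in> \<Omega> \<Longrightarrow> c \<noteq> 0 \<Longrightarrow> c *\<^sub>R v \<in> \<Omega>"
  using proj_set_\<Omega> unfolding proj_set_def by blast

lemma zero_notin_\<Omega>: "0 \<notin> \<Omega>"
  using proj_set_\<Omega> unfolding proj_set_def by blast

lemma mem_\<Omega>_iff: "v \<in> \<Omega> \<longleftrightarrow> v \<in> D \<or> - v \<in> D"
  using f_nonzero scaleR_in_\<Omega>[of v "-1"] scaleR_in_\<Omega>[of "- v" "-1"] by (force simp: D_def)

lemma D_subset_\<Omega>: "D \<subseteq> \<Omega>"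
  by (auto simp: D_def)

lemma D_scaleR: "v \<in> D \<Longrightarrow> 0 < c \<Longrightarrow> c *\<^sub>R v \<in> D"
  using scaleR_in_\<Omega> by (auto simp: D_def)

lemma D_add: "u \<in> D \<Longrightarrow> v \<in> D \<Longrightarrow> u + v \<in> D"
  using proj_set_chart_convex_add[OF proj_set_\<Omega> linear_f f_nonzero convex_chart, of u v]
  by (simp add: D_def)

lemma open_D: "open D"
proof -
  have "open {v. 0 < f v}"
    by (rule open_Collect_less) (simp_all add: continuous_on_f)
  moreover have "D = \<Omega> \<inter> {v. 0 < f v}" by (auto simp: D_def)
  ultimately show ?thesis using open_\<Omega> by auto
qed

lemma convex_D: "convex D"
  unfolding convex_def
proof (intro ballI allI impI)
  fix x y :: "real^'n" and u v :: real
  assume "x \<in> D" "y \<in> D" "0 \<le> u" "0 \<le> v" "u + v = 1"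
  thus "u *\<^sub>R x + v *\<^sub>R y \<in> D"
    by (cases "u = 0"; cases "v = 0") (auto intro!: D_add D_scaleR)
qed

lemma closure_D_norm_le:
  obtains R where "R > 0" "\<And>v. v \<in> closure D \<Longrightarrow> norm v \<le> R * f v"
proof -
  obtain R where R: "R > 0" "\<forall>z\<in>chart f ` \<Omega>. norm z \<le> R" using bounded_chart bounded_pos by blast
  have "norm v \<le> R * f v" if "v \<in> D" for v
  proof -
    have fv: "0 < f v" and "v \<in> \<Omega>" using that by (auto simp: D_def)
    hence "norm ((1 / f v) *\<^sub>R v) \<le> R" using R by (auto simp: chart_def)
    thus "norm v \<le> R * f v" using fv by (simp add: field_simps)
  qed
  moreover have "closed {v. norm v \<le> R * f v}"
    by (rule closed_Collect_le)
      (simp_all add: continuous_on_norm_id continuous_on_mult_left continuous_on_f)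
  ultimately have "closure D \<subseteq> {v. norm v \<le> R * f v}"
    by (intro closure_minimal) auto
  thus ?thesis using that R by blast
qed

lemma closure_D_f_nonneg:
  assumes "v \<in> closure D"
  shows "0 \<le> f v"
proof -
  obtain R where "R > 0" "norm v \<le> R * f v" using closure_D_norm_le assms by metis
  thus ?thesis using norm_ge_zero[of v] by (smt (verit) zero_le_mult_iff)
qed

lemma closure_D_f_pos:
  assumes "v \<in> closure D" "v \<noteq> 0"
  shows "0 < f v"
proof -
  obtain R where "R > 0" "norm v \<le> R * f v" using closure_D_norm_le assms(1) by metis
  thus ?thesis using assms(2) by (smt (verit) zero_less_mult_iff zero_less_norm_iff)
qed

lemma closure_D_pointed: "v \<in> closure D \<Longrightarrow> - v \<in> closure D \<Longrightarrow> v = 0"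
  using closure_D_f_pos[of v] closure_D_f_nonneg[of "- v"] by force

lemma closure_D_dominated_norm_le:
  obtains L where "L > 0"
    "\<And>u w M. u \<in> closure D \<Longrightarrow> M *\<^sub>R w - u \<in> closure D \<Longrightarrow> 0 \<le> M \<Longrightarrow> norm u \<le> L * M * norm w"
proof -
  obtain R where R: "R > 0" "\<And>v. v \<in> closure D \<Longrightarrow> norm v \<le> R * f v" using closure_D_norm_le by blast
  obtain B where B: "B > 0" "\<And>z. norm (f z) \<le> norm z * B"
    using bounded_linear.pos_bounded linear_f linear_conv_bounded_linear by blast
  have "norm u \<le> (R * B) * M * norm w"
    if "u \<in> closure D" "M *\<^sub>R w - u \<in> closure D" "0 \<le> M" for u w M
  proof -
    have "f u \<le> M * f w" using closure_D_f_nonneg[OF that(2)] by simp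
    also have "\<dots> \<le> M * (norm w * B)" using B(2)[of w] that(3) by (simp add: mult_left_mono)
    finally have "R * f u \<le> R * (M * (norm w * B))" using R(1) by simp
    thus ?thesis using R(2)[OF that(1)] by (simp add: algebra_simps)
  qed
  thus thesis using that[of "R * B"] R(1) B(1) by simp
qed

lemma closure_D_scaleR:
  assumes v: "v \<in> closure D" and c: "0 \<le> c"
  shows "c *\<^sub>R v \<in> closure D"
proof -
  have pos: "d *\<^sub>R v \<in> closure D" if "0 < d" for d
  proof -
    have "closure ((*\<^sub>R) d ` D) \<subseteq> closure D" using D_scaleR that by (intro closure_mono) auto
    thus ?thesis using closure_scaleR[of d D] v by auto
  qed
  have "(\<lambda>n. inverse (real (Suc n)) *\<^sub>R v) \<longlonglongrightarrow> 0 *\<^sub>R v"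
    by (intro tendsto_scaleR LIMSEQ_inverse_real_of_nat tendsto_const)
  hence "0 *\<^sub>R v \<in> closure D"
    by (rule closed_sequentially[OF closed_closure, rotated]) (simp add: pos)
  thus ?thesis using pos c by (cases "c = 0") auto
qed

lemma closure_D_add:
  assumes "u \<in> closure D" "v \<in> closure D"
  shows "u + v \<in> closure D"
proof -
  have "(1/2) *\<^sub>R u + (1/2) *\<^sub>R v \<in> closure D"
    using assms convex_closure[OF convex_D] by (intro convexD) auto
  from closure_D_scaleR[OF this, of 2] show ?thesis by (simp add: scaleR_add_right)
qed

lemma D_add_closure_D:
  assumes "v \<in> D" "w \<in> closure D"
  shows "v + w \<in> D"
proof -
  obtain e where e: "e > 0" "ball v e \<subseteq> D" using open_D assms(1) open_contains_ball by blast
  obtain w' where w': "w' \<in> D" "dist w' w < e" using assms(2) e(1) closure_approachable by blast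
  have "v + (w - w') \<in> D" using w' e by (auto simp: dist_norm norm_minus_commute)
  from D_add[OF this w'(1)] show ?thesis by simp
qed

lemma closure_D_Int_\<Omega>:
  assumes "v \<in> closure D" "v \<in> \<Omega>"
  shows "v \<in> D"
proof (rule ccontr)
  assume "v \<notin> D"
  hence "- v \<in> closure D" using assms(2) mem_\<Omega>_iff closure_subset by blast
  thus False using closure_D_pointed assms zero_notin_\<Omega> by blast
qed

lemma closure_\<Omega>: "closure \<Omega> = closure D \<union> uminus ` closure D"
proof -
  have "\<Omega> = D \<union> uminus ` D" using mem_\<Omega>_iff mem_uminus_image by blast
  hence "closure \<Omega> = closure D \<union> closure (uminus ` D)" by (metis closure_Un)
  also have "closure (uminus ` D) = uminus ` closure D"
    using closure_scaleR[of "-1" D] by (simp add: o_def)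
  finally show ?thesis .
qed

lemma mem_proj_closure_iff:
  "v \<in> proj_closure \<Omega> \<longleftrightarrow> v \<noteq> 0 \<and> (v \<in> closure D \<or> - v \<in> closure D)"
  unfolding proj_closure_def closure_\<Omega> by (auto simp: mem_uminus_image)

lemma D_linear_image:
  assumes g: "\<And>v. v \<in> D \<Longrightarrow> g *v v \<in> \<Omega>" and u: "u \<in> D" "0 < f (g *v u)" and v: "v \<in> D"
  shows "g *v v \<in> D"
proof -
  have "0 < f (g *v v)"
  proof (rule ccontr)
    assume "\<not> 0 < f (g *v v)"
    hence neg: "f (g *v v) < 0" using f_nonzero g v by force
    define t where "t = f (g *v u) / (f (g *v u) - f (g *v v))"
    have t: "0 \<le> t" "t \<le> 1" using u(2) neg by (auto simp: t_def field_simps)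
    have "(1 - t) *\<^sub>R u + t *\<^sub>R v \<in> D" using convex_D t u v by (intro convexD) auto
    hence "f (g *v ((1 - t) *\<^sub>R u + t *\<^sub>R v)) \<noteq> 0" using f_nonzero g by blast
    moreover have "f (g *v ((1 - t) *\<^sub>R u + t *\<^sub>R v)) = (1 - t) * f (g *v u) + t * f (g *v v)"
      by (simp add: matrix_vector_right_distrib matrix_vector_mult_scaleR)
    moreover have "(1 - t) * f (g *v u) + t * f (g *v v) = 0"
      using u(2) neg by (simp add: t_def field_simps)
    ultimately show False by simp
  qed
  thus ?thesis using g v by (simp add: D_def)
qed

lemma closure_D_linear_image:
  assumes "\<And>v. v \<in> D \<Longrightarrow> g *v v \<in> closure D" "v \<in> closure D"
  shows "g *v v \<in> closure D"
proof -
  have "(\<lambda>v. g *v v) ` closure D \<subseteq> closure D"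
    by (rule image_closure_subset) (use assms(1) in \<open>auto intro: matrix_vector_mult_linear_continuous_on\<close>)
  thus ?thesis using assms(2) by blast
qed

section \<open>Open faces\<close>

text \<open>\<open>f\<close> vanishes nowhere on the lift of \<open>closure \<Omega>\<close>, so a lifted segment cannot pass from
  \<open>closure D\<close> to \<open>- closure D\<close>.\<close>

lemma proj_open_segment_closure_D:
  assumes seg: "proj_open_segment a b \<subseteq> proj_closure \<Omega>"
    and st1: "0 < s1" "0 < t1" and in_D: "s1 *\<^sub>R a + t1 *\<^sub>R b \<in> closure D"
    and st: "0 < s" "0 < t"
  shows "s *\<^sub>R a + t *\<^sub>R b \<in> closure D"
proof (rule ccontr)
  define u where "u = s1 *\<^sub>R a + t1 *\<^sub>R b"
  define z where "z = s *\<^sub>R a + t *\<^sub>R b"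
  have in_closure: "s' *\<^sub>R a + t' *\<^sub>R b \<in> proj_closure \<Omega>" if "0 < s'" "0 < t'" for s' t'
    using seg proj_open_segment_memI[OF that, of 1] by auto
  assume "s *\<^sub>R a + t *\<^sub>R b \<notin> closure D"
  hence "- z \<in> closure D" "z \<noteq> 0" using in_closure[OF st] mem_proj_closure_iff by (auto simp: z_def)
  hence fz: "f z < 0" using closure_D_f_pos[of "- z"] by simp
  have "u \<noteq> 0" using in_closure[OF st1] by (simp add: u_def mem_proj_closure_iff)
  hence fu: "0 < f u" using closure_D_f_pos in_D unfolding u_def by blast
  define l where "l = f u / (f u - f z)"
  have l: "0 < l" "l < 1" using fu fz by (auto simp: l_def field_simps)
  define w where "w = (1 - l) *\<^sub>R u + l *\<^sub>R z"
  have "w = ((1 - l) * s1 + l * s) *\<^sub>R a + ((1 - l) * t1 + l * t) *\<^sub>R b"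
    by (simp add: w_def u_def z_def algebra_simps)
  moreover have "0 < (1 - l) * s1 + l * s" "0 < (1 - l) * t1 + l * t"
    using l st1 st by (simp_all add: add_pos_pos)
  ultimately have "w \<in> proj_closure \<Omega>" using in_closure by simp
  hence "f w \<noteq> 0" using mem_proj_closure_iff closure_D_f_pos[of w] closure_D_f_pos[of "- w"] by force
  moreover have "f w = (1 - l) * f u + l * f z" by (simp add: w_def)
  moreover have "(1 - l) * f u + l * f z = 0" using fu fz by (simp add: l_def field_simps)
  ultimately show False by simp
qed

text \<open>The comparability classes are the parts of the cone \<open>closure D\<close>; the open face of \<open>x\<close>
  lifts into the part of \<open>x\<close>.\<close>

definition comparable :: "real^'n \<Rightarrow> real^'n \<Rightarrow> bool" where
  "comparable x y \<longleftrightarrow> (\<exists>M\<ge>1. M *\<^sub>R x - y \<in> closure D \<and> M *\<^sub>R y - x \<in> closure D)"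

lemma comparable_refl: "x \<in> closure D \<Longrightarrow> comparable x x"
  unfolding comparable_def by (rule exI[of _ 2]) (simp add: scaleR_2)

lemma proj_open_segment_comparable:
  assumes seg: "proj_open_segment a b \<subseteq> proj_closure \<Omega>"
    and x: "x = c *\<^sub>R (s1 *\<^sub>R a + t1 *\<^sub>R b)" "x \<noteq> 0" "x \<in> closure D"
    and pos: "0 < s1" "0 < t1" "0 < s2" "0 < t2"
    and in_D: "s1 *\<^sub>R a + t1 *\<^sub>R b \<in> closure D"
  shows "s2 *\<^sub>R a + t2 *\<^sub>R b \<in> closure D" "comparable x (s2 *\<^sub>R a + t2 *\<^sub>R b)"
proof -
  note in_seg = proj_open_segment_closure_D[OF seg pos(1,2) in_D]
  have c: "0 < c"
  proof (rule ccontr)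
    assume "\<not> 0 < c"
    hence "(- c) *\<^sub>R (s1 *\<^sub>R a + t1 *\<^sub>R b) \<in> closure D" using closure_D_scaleR[OF in_D, of "- c"] by simp
    hence "- x \<in> closure D" using x(1) by simp
    thus False using closure_D_pointed x(2,3) by blast
  qed
  define M where "M = s2 / (c * s1) + t2 / (c * t1) + c * s1 / s2 + c * t1 / t2 + 1"
  have "0 < s2 / (c * s1)" "0 < t2 / (c * t1)" "0 < c * s1 / s2" "0 < c * t1 / t2"
    using pos c by auto
  hence "s2 / (c * s1) < M" "t2 / (c * t1) < M" "c * s1 / s2 < M" "c * t1 / t2 < M" "1 \<le> M"
    by (simp_all add: M_def)
  hence M: "s2 < M * c * s1" "t2 < M * c * t1" "c * s1 < M * s2" "c * t1 < M * t2" "1 \<le> M"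
    using pos c by (simp_all add: divide_less_eq mult.assoc)
  have "M *\<^sub>R x - (s2 *\<^sub>R a + t2 *\<^sub>R b) = (M * c * s1 - s2) *\<^sub>R a + (M * c * t1 - t2) *\<^sub>R b"
    by (simp add: x algebra_simps)
  also have "\<dots> \<in> closure D" using M by (intro in_seg) simp_all
  finally have "M *\<^sub>R x - (s2 *\<^sub>R a + t2 *\<^sub>R b) \<in> closure D" .
  moreover have "M *\<^sub>R (s2 *\<^sub>R a + t2 *\<^sub>R b) - x = (M * s2 - c * s1) *\<^sub>R a + (M * t2 - c * t1) *\<^sub>R b"
    by (simp add: x algebra_simps)
  moreover have "\<dots> \<in> closure D" using M by (intro in_seg) simp_all
  ultimately show "comparable x (s2 *\<^sub>R a + t2 *\<^sub>R b)" using M(5) unfolding comparable_def by auto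
  show "s2 *\<^sub>R a + t2 *\<^sub>R b \<in> closure D" using pos by (intro in_seg)
qed

lemma open_face_comparable:
  assumes x: "x \<in> closure D" "x \<noteq> 0" and y: "y \<in> open_face \<Omega> x"
  obtains c y' where "y = c *\<^sub>R y'" "c \<noteq> 0" "y' \<in> closure D" "comparable x y'"
proof -
  consider c where "y = c *\<^sub>R x" "c \<noteq> 0"
    | a b where "proj_open_segment a b \<subseteq> proj_closure \<Omega>" "x \<in> proj_open_segment a b"
        "y \<in> proj_open_segment a b"
    using y unfolding open_face_def by blast
  thus thesis
  proof cases
    case 1
    thus thesis using that x comparable_refl by blast
  next
    case (2 a b)
    obtain c1 s1 t1 where X: "x = c1 *\<^sub>R (s1 *\<^sub>R a + t1 *\<^sub>R b)" "0 < s1" "0 < t1"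
      using 2(2) unfolding proj_open_segment_def by blast
    obtain c2 s2 t2 where Y: "y = c2 *\<^sub>R (s2 *\<^sub>R a + t2 *\<^sub>R b)" "c2 \<noteq> 0" "0 < s2" "0 < t2"
      using 2(3) unfolding proj_open_segment_def by blast
    have "s1 *\<^sub>R a + t1 *\<^sub>R b \<in> proj_closure \<Omega>" using 2(1) proj_open_segment_memI[OF X(2,3), of 1] by auto
    hence "s1 *\<^sub>R a + t1 *\<^sub>R b \<in> closure D \<or> s1 *\<^sub>R (- a) + t1 *\<^sub>R (- b) \<in> closure D"
      using mem_proj_closure_iff by (simp add: algebra_simps)
    thus thesis
    proof
      assume "s1 *\<^sub>R a + t1 *\<^sub>R b \<in> closure D"
      from proj_open_segment_comparable[OF 2(1) X(1) x(2,1) X(2,3) Y(3,4) this]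
      show thesis using that Y by blast
    next
      assume in_D: "s1 *\<^sub>R (- a) + t1 *\<^sub>R (- b) \<in> closure D"
      have "x = (- c1) *\<^sub>R (s1 *\<^sub>R (- a) + t1 *\<^sub>R (- b))"
        "y = (- c2) *\<^sub>R (s2 *\<^sub>R (- a) + t2 *\<^sub>R (- b))" using X Y by (simp_all add: algebra_simps)
      from proj_open_segment_comparable[OF _ this(1) x(2,1) X(2,3) Y(3,4) in_D] this(2)
      show thesis using that[of "- c2"] Y(2) 2(1) by (simp add: proj_open_segment_uminus)
    qed
  qed
qed

lemma open_face_disjoint_\<Omega>:
  assumes x: "x \<in> closure D" "x \<noteq> 0" "x \<notin> \<Omega>" and y: "y \<in> open_face \<Omega> x"
  shows "y \<notin> \<Omega>"
proof
  assume "y \<in> \<Omega>"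
  obtain c y' M where y': "y = c *\<^sub>R y'" "c \<noteq> 0" "y' \<in> closure D" "1 \<le> M"
    "M *\<^sub>R x - y' \<in> closure D"
    using open_face_comparable[OF x(1,2) y] unfolding comparable_def by metis
  have "y' \<in> \<Omega>" using scaleR_in_\<Omega>[OF \<open>y \<in> \<Omega>\<close>, of "1 / c"] y' by simp
  hence "y' + (M *\<^sub>R x - y') \<in> D" using closure_D_Int_\<Omega> D_add_closure_D y' by blast
  hence "(1 / M) *\<^sub>R (M *\<^sub>R x) \<in> D" using y'(4) D_scaleR[of "M *\<^sub>R x" "1 / M"] by simp
  hence "x \<in> D" using y'(4) by simp
  thus False using x(3) D_subset_\<Omega> by blast
qed

lemma open_face_uminus_mem:
  assumes "y \<in> open_face \<Omega> x"
  shows "- y \<in> open_face \<Omega> x"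
proof -
  have "- y \<in> proj_open_segment a b" if "y \<in> proj_open_segment a b" for a b
    using proj_open_segment_scaleR[OF that, of "-1"] by simp
  moreover have "- y \<in> proj_closure \<Omega>" if "y \<in> proj_closure \<Omega>"
    using that by (auto simp: mem_proj_closure_iff)
  moreover have "- y = (- c) *\<^sub>R x" "- c \<noteq> 0" if "y = c *\<^sub>R x" "c \<noteq> 0" for c
    using that by simp_all
  ultimately show ?thesis using assms unfolding open_face_def by blast
qed

lemma linear_image_D_nonzero:
  assumes T: "T \<noteq> 0" "\<And>v. v \<in> D \<Longrightarrow> T *v v \<in> closure D" and v: "v \<in> D"
  shows "T *v v \<noteq> 0"
proof
  assume Tv: "T *v v = 0"
  have "T *v w = 0" for w
  proof -
    obtain e where e: "e > 0" "\<And>d. \<bar>d\<bar> < e \<Longrightarrow> v + d *\<^sub>R w \<in> D"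
      using open_contains_line_nbhd[OF open_D v] by metis
    have "v + (e / 2) *\<^sub>R w \<in> D" "v + (- e / 2) *\<^sub>R w \<in> D"
      using e(2)[of "e / 2"] e(2)[of "- e / 2"] e(1) by simp_all
    hence "T *v (v + (e / 2) *\<^sub>R w) \<in> closure D" "T *v (v + (- e / 2) *\<^sub>R w) \<in> closure D"
      using T(2) by blast+
    hence "(e / 2) *\<^sub>R (T *v w) \<in> closure D" "- ((e / 2) *\<^sub>R (T *v w)) \<in> closure D"
      using Tv by (simp_all add: matrix_vector_right_distrib matrix_vector_mult_diff_distrib
        matrix_vector_mult_scaleR)
    thus ?thesis using closure_D_pointed e(1) by fastforce
  qed
  thus False using T(1) by (simp add: matrix_eq)
qed

lemma proj_open_segment_D_subset_\<Omega>:
  assumes "a \<in> D" "b \<in> D"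
  shows "proj_open_segment a b \<subseteq> \<Omega>"
  using assms D_add D_scaleR D_subset_\<Omega> scaleR_in_\<Omega> unfolding proj_open_segment_def by blast

text \<open>Pushing \<open>v\<close> and \<open>w\<close> slightly apart along their line inside the open set \<open>D\<close>: with
  \<open>a = v + \<epsilon>(v - w)\<close> and \<open>b = w + \<epsilon>(w - v)\<close> one has \<open>(1 + \<epsilon>) a + \<epsilon> b = (1 + 2\<epsilon>) v\<close>.\<close>

lemma D_proj_open_segment_through:
  assumes v: "v \<in> D" and w: "w \<in> D"
  obtains a b where "a \<in> D" "b \<in> D" "v \<in> proj_open_segment a b" "w \<in> proj_open_segment a b"
proof -
  obtain e1 where e1: "e1 > 0" "\<And>d. \<bar>d\<bar> < e1 \<Longrightarrow> v + d *\<^sub>R (v - w) \<in> D"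
    using open_contains_line_nbhd[OF open_D v] by metis
  obtain e2 where e2: "e2 > 0" "\<And>d. \<bar>d\<bar> < e2 \<Longrightarrow> w + d *\<^sub>R (w - v) \<in> D"
    using open_contains_line_nbhd[OF open_D w] by metis
  define \<epsilon> where "\<epsilon> = min e1 e2 / 2"
  have \<epsilon>: "0 < \<epsilon>" "\<epsilon> < e1" "\<epsilon> < e2" using e1 e2 by (auto simp: \<epsilon>_def)
  define a where "a = v + \<epsilon> *\<^sub>R (v - w)"
  define b where "b = w + \<epsilon> *\<^sub>R (w - v)"
  have "(1 + \<epsilon>) *\<^sub>R a + \<epsilon> *\<^sub>R b = (1 + \<epsilon> + \<epsilon>) *\<^sub>R v"
    "\<epsilon> *\<^sub>R a + (1 + \<epsilon>) *\<^sub>R b = (1 + \<epsilon> + \<epsilon>) *\<^sub>R w"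
    by (simp_all add: a_def b_def vec_eq_iff algebra_simps)
  hence v: "v = (1 / (1 + \<epsilon> + \<epsilon>)) *\<^sub>R ((1 + \<epsilon>) *\<^sub>R a + \<epsilon> *\<^sub>R b)"
    and w: "w = (1 / (1 + \<epsilon> + \<epsilon>)) *\<^sub>R (\<epsilon> *\<^sub>R a + (1 + \<epsilon>) *\<^sub>R b)"
    using \<epsilon>(1) by simp_all
  show thesis
  proof (rule that)
    show "a \<in> D" "b \<in> D" using \<epsilon> e1 e2 by (simp_all add: a_def b_def)
    show "v \<in> proj_open_segment a b" "w \<in> proj_open_segment a b"
      unfolding v w using \<epsilon>(1) by (intro proj_open_segment_memI; simp)+
  qed
qed

lemma linear_image_open_face:
  assumes T: "T \<noteq> 0" "\<And>v. v \<in> D \<Longrightarrow> T *v v \<in> closure D"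
    and x: "w \<in> D" "T *v w = x" and v: "v \<in> \<Omega>"
  shows "T *v v \<in> open_face \<Omega> x"
proof -
  have T_proj_closure: "T *v u \<in> proj_closure \<Omega>" if u: "u \<in> \<Omega>" for u
  proof -
    consider "u \<in> D" | "- u \<in> D" using mem_\<Omega>_iff u by blast
    thus ?thesis
    proof cases
      case 1
      thus ?thesis using T(2) linear_image_D_nonzero[OF T] by (simp add: mem_proj_closure_iff)
    next
      case 2
      thus ?thesis using T(2)[of "- u"] linear_image_D_nonzero[OF T, of "- u"]
        by (simp add: mem_proj_closure_iff vec.neg)
    qed
  qed
  have "T *v u \<in> open_face \<Omega> x" if u: "u \<in> D" for u
  proof -
    obtain a b where ab: "a \<in> D" "b \<in> D" "u \<in> proj_open_segment a b" "w \<in> proj_open_segment a b"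
      by (rule D_proj_open_segment_through[OF u x(1)])
    note image = proj_open_segment_image[of T a b, symmetric]
    have "proj_open_segment (T *v a) (T *v b) \<subseteq> proj_closure \<Omega>"
      unfolding image using T_proj_closure proj_open_segment_D_subset_\<Omega>[OF ab(1,2)] by blast
    moreover have "T *v u \<in> proj_open_segment (T *v a) (T *v b)" "x \<in> proj_open_segment (T *v a) (T *v b)"
      unfolding image using ab(3,4) x(2) by blast+
    moreover have "T *v u \<in> proj_closure \<Omega>" using u D_subset_\<Omega> by (intro T_proj_closure) blast
    ultimately show ?thesis unfolding open_face_def by blast
  qed
  moreover have "T *v v = - (T *v - v)" by (simp add: vec.neg)
  ultimately show ?thesis using v mem_\<Omega>_iff open_face_uminus_mem by metis
qed

end

section \<open>Closed convex subsets and their stabilizers\<close>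

locale convex_subset_chart = properly_convex_chart \<Omega> f for \<Omega> :: "(real^'n) set" and f +
  fixes C :: "(real^'n) set" and f' :: "real^'n \<Rightarrow> real"
  assumes C_subset_\<Omega>: "C \<subseteq> \<Omega>" and closedin_C: "closedin (top_of_set \<Omega>) C"
    and proj_set_C: "proj_set C" and linear_f': "linear f'"
    and f'_nonzero: "\<And>v. v \<in> C \<Longrightarrow> f' v \<noteq> 0" and convex_chart_C: "convex (chart f' ` C)"
begin

lemma scaleR_in_C: "v \<in> C \<Longrightarrow> c \<noteq> 0 \<Longrightarrow> c *\<^sub>R v \<in> C"
  using proj_set_C unfolding proj_set_def by blast

lemma closure_C_Int_\<Omega>:
  assumes "v \<in> closure C" "v \<in> \<Omega>"
  shows "v \<in> C"
proof -
  obtain S where S: "closed S" "C = \<Omega> \<inter> S" using closedin_C closedin_closed by blast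
  have "closure C \<subseteq> S" using S by (intro closure_minimal) auto
  thus ?thesis using assms S by auto
qed

lemma closure_C_scaleR:
  assumes "v \<in> closure C" "c \<noteq> 0"
  shows "c *\<^sub>R v \<in> closure C"
proof -
  have "closure ((*\<^sub>R) c ` C) \<subseteq> closure C" using scaleR_in_C assms(2) by (intro closure_mono) auto
  thus ?thesis using closure_scaleR[of c C] assms(1) by auto
qed

text \<open>If \<open>f'\<close> took opposite signs at \<open>u\<close> and \<open>v\<close>, then \<open>f\<close> would vanish somewhere on the
  chart segment between them, which lies in the chart image of \<open>C \<subseteq> \<Omega>\<close>.\<close>

lemma C_D_add:
  assumes u: "u \<in> C" "u \<in> D" and v: "v \<in> C" "v \<in> D"
  shows "u + v \<in> C"
proof (cases "0 < f' u * f' v")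
  case True
  thus ?thesis using proj_set_chart_convex_add[OF proj_set_C linear_f' f'_nonzero convex_chart_C] u v
    by blast
next
  case False
  hence opp: "f' u * f' v < 0" using f'_nonzero u v by (simp add: not_less order_le_less)
  define al where "al = f u / f' u"
  define be where "be = f v / f' v"
  have "0 < f u" "0 < f v" using u v by (auto simp: D_def)
  hence "al * be < 0" using opp
    by (auto simp: al_def be_def mult_less_0_iff divide_less_0_iff zero_less_divide_iff)
  define l where "l = be / (be - al)"
  have "0 \<le> l" "l \<le> 1" using \<open>al * be < 0\<close> by (auto simp: l_def mult_less_0_iff field_simps)
  hence "l *\<^sub>R chart f' u + (1 - l) *\<^sub>R chart f' v \<in> chart f' ` C"
    using u v by (intro convexD[OF convex_chart_C]) auto
  then obtain w where w: "w \<in> C" "l *\<^sub>R chart f' u + (1 - l) *\<^sub>R chart f' v = chart f' w" by auto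
  have "chart f' w \<in> \<Omega>" unfolding chart_def using f'_nonzero w C_subset_\<Omega> by (intro scaleR_in_\<Omega>) auto
  hence "f (chart f' w) \<noteq> 0" using f_nonzero by blast
  moreover have "f (l *\<^sub>R chart f' u + (1 - l) *\<^sub>R chart f' v) = l * al + (1 - l) * be"
    by (simp add: chart_def al_def be_def)
  moreover have "be - al \<noteq> 0" using \<open>al * be < 0\<close> by auto
  hence "l * al + (1 - l) * be = 0" by (simp add: l_def field_simps)
  ultimately show ?thesis using w by simp
qed

lemma closure_C_Int_closure_D:
  assumes "v \<in> closure C" "v \<in> closure D" "v \<noteq> 0"
  shows "v \<in> closure (C \<inter> D)"
proof -
  have "C = (C \<inter> D) \<union> (C \<inter> uminus ` D)" using C_subset_\<Omega> mem_\<Omega>_iff mem_uminus_image by blast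
  hence "closure C = closure (C \<inter> D) \<union> closure (C \<inter> uminus ` D)" by (metis closure_Un)
  moreover have "closure (C \<inter> uminus ` D) \<subseteq> uminus ` closure D"
    using closure_mono[of "C \<inter> uminus ` D" "uminus ` D"] closure_scaleR[of "-1" D] by (auto simp: o_def)
  moreover have "v \<notin> uminus ` closure D"
    using closure_D_pointed assms(2,3) mem_uminus_image by blast
  ultimately show ?thesis using assms(1) by blast
qed

lemma C_D_combination:
  assumes q: "q \<in> closure (C \<inter> D)" and p: "p \<in> C" "p \<in> D" and ab: "0 \<le> a" "0 < b"
  shows "a *\<^sub>R q + b *\<^sub>R p \<in> C \<and> a *\<^sub>R q + b *\<^sub>R p \<in> D"
proof -
  have "q \<in> closure D" using q closure_mono[of "C \<inter> D" D] by blast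
  hence "b *\<^sub>R p + a *\<^sub>R q \<in> D" using D_add_closure_D[OF D_scaleR[OF p(2) ab(2)]] closure_D_scaleR ab(1)
    by blast
  hence "a *\<^sub>R q + b *\<^sub>R p \<in> D" by (simp add: add.commute)
  moreover have "a *\<^sub>R q + b *\<^sub>R p \<in> closure C"
  proof -
    have "b *\<^sub>R p \<in> C \<inter> D" using p ab scaleR_in_C D_scaleR by auto
    hence "(+) (b *\<^sub>R p) ` (C \<inter> D) \<subseteq> C \<inter> D" using C_D_add D_add by (auto simp: add.commute)
    hence "closure ((+) (b *\<^sub>R p) ` (C \<inter> D)) \<subseteq> closure (C \<inter> D)" by (rule closure_mono)
    hence "(+) (b *\<^sub>R p) ` closure (C \<inter> D) \<subseteq> closure (C \<inter> D)" by (simp add: closure_translation)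
    moreover have "a *\<^sub>R q \<in> closure (C \<inter> D)"
    proof -
      have "(\<lambda>n. (a + inverse (real (Suc n))) *\<^sub>R q) \<longlonglongrightarrow> (a + 0) *\<^sub>R q"
        by (intro tendsto_intros LIMSEQ_inverse_real_of_nat)
      hence lim: "(\<lambda>n. (a + inverse (real (Suc n))) *\<^sub>R q) \<longlonglongrightarrow> a *\<^sub>R q" by simp
      have "(a + inverse (real (Suc n))) *\<^sub>R q \<in> closure (C \<inter> D)" for n
      proof -
        have "0 < a + inverse (real (Suc n))" using ab(1) by (simp add: add_nonneg_pos)
        hence "closure ((*\<^sub>R) (a + inverse (real (Suc n))) ` (C \<inter> D)) \<subseteq> closure (C \<inter> D)"
          using scaleR_in_C D_scaleR by (intro closure_mono) auto
        thus ?thesis using closure_scaleR q by blast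
      qed
      with lim show ?thesis by (rule closed_sequentially[OF closed_closure, rotated])
    qed
    ultimately show ?thesis using closure_mono[of "C \<inter> D" C] by (auto simp: add.commute)
  qed
  ultimately show ?thesis using closure_C_Int_\<Omega> D_subset_\<Omega> by blast
qed

lemma ideal_boundary_lift:
  assumes "x \<in> ideal_boundary C"
  obtains x' where "x' \<in> closure C" "x' \<in> closure D" "x' \<noteq> 0" "x' \<notin> C"
    "open_face \<Omega> x' = open_face \<Omega> x"
proof -
  have x: "x \<in> closure C" "x \<noteq> 0" "x \<notin> C"
    using assms unfolding ideal_boundary_def proj_boundary_def proj_closure_def by auto
  have "x \<in> proj_closure \<Omega>" using x closure_mono[OF C_subset_\<Omega>] by (auto simp: proj_closure_def)
  then obtain x' where x': "x' \<in> closure D" "x' = x \<or> x' = - x"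
    unfolding mem_proj_closure_iff by blast
  have "- x \<in> closure C" "- x \<notin> C"
    using closure_C_scaleR[OF x(1), of "-1"] scaleR_in_C[of "- x" "-1"] x(3) by auto
  thus thesis using that[of x] that[of "- x"] x' x open_face_uminus[of \<Omega> x] by auto
qed

lemma C_Int_D_nonempty:
  assumes "C \<noteq> {}"
  obtains p where "p \<in> C" "p \<in> D"
proof -
  obtain c where c: "c \<in> C" using assms by blast
  show thesis
  proof (cases "c \<in> D")
    case False
    hence "- c \<in> D" using c C_subset_\<Omega> mem_\<Omega>_iff by blast
    thus thesis using that scaleR_in_C[OF c, of "-1"] by simp
  qed (use c that in blast)
qed

lemma closure_G_image_C_subset:
  fixes G :: "(real^'n^'n) set"
  assumes "\<And>g v. g \<in> G \<Longrightarrow> v \<in> C \<Longrightarrow> g *v v \<in> C" "T \<in> closure G" "v \<in> C"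
  shows "T *v v \<in> closure C"
proof -
  obtain g where "\<And>n. g n \<in> G" "g \<longlonglongrightarrow> T" using assms(2) unfolding closure_sequential by blast
  moreover from this have "(\<lambda>n. g n *v v) \<longlonglongrightarrow> T *v v" by (intro tendsto_matrix_vector_mult tendsto_const)
  ultimately show ?thesis
    unfolding closure_sequential using assms(1,3) by (intro exI[of _ "\<lambda>n. g n *v v"]) auto
qed

end

locale stabilizer_chart = convex_subset_chart \<Omega> f C f' for \<Omega> C :: "(real^'n) set" and f f' +
  fixes G :: "(real^'n^'n) set"
  assumes pgl_subgroup_G: "pgl_subgroup G"
    and G_stab: "\<And>g. g \<in> G \<Longrightarrow> (\<lambda>v. g *v v) ` \<Omega> = \<Omega> \<and> (\<lambda>v. g *v v) ` C = C"
begin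

lemma G_scaleR: "g \<in> G \<Longrightarrow> c \<noteq> 0 \<Longrightarrow> c *\<^sub>R g \<in> G"
  and G_matrix_inv: "g \<in> G \<Longrightarrow> matrix_inv g \<in> G"
  and G_invertible: "g \<in> G \<Longrightarrow> invertible g"
  using pgl_subgroup_G unfolding pgl_subgroup_def by blast+

lemma G_maps_\<Omega>: "g \<in> G \<Longrightarrow> v \<in> \<Omega> \<Longrightarrow> g *v v \<in> \<Omega>"
  using G_stab imageI[of v \<Omega> "\<lambda>v. g *v v"] by auto

lemma G_maps_C: "g \<in> G \<Longrightarrow> v \<in> C \<Longrightarrow> g *v v \<in> C"
  using G_stab imageI[of v C "\<lambda>v. g *v v"] by auto

lemma G_sign_preserves_D:
  assumes g: "g \<in> G" and "D \<noteq> {}"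
  obtains \<sigma> where "\<sigma> = 1 \<or> \<sigma> = -1" "\<And>v. v \<in> D \<Longrightarrow> (\<sigma> *\<^sub>R g) *v v \<in> D"
proof -
  obtain d where d: "d \<in> D" using assms(2) by blast
  define \<sigma> where "\<sigma> = (if 0 < f (g *v d) then 1 else - 1 :: real)"
  have \<sigma>: "\<sigma> = 1 \<or> \<sigma> = -1" by (simp add: \<sigma>_def)
  have scale: "(\<sigma> *\<^sub>R g) *v v = \<sigma> *\<^sub>R (g *v v)" for v
    by (simp add: scaleR_matrix_vector_assoc)
  have in_\<Omega>: "(\<sigma> *\<^sub>R g) *v v \<in> \<Omega>" if "v \<in> D" for v
  proof -
    have "g *v v \<in> \<Omega>" using G_maps_\<Omega>[OF g] that D_subset_\<Omega> by blast
    thus ?thesis unfolding scale using scaleR_in_\<Omega>[of "g *v v" "-1"] \<sigma> by auto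
  qed
  hence "f (g *v d) \<noteq> 0" using d f_nonzero[of "g *v d"] G_maps_\<Omega>[OF g] D_subset_\<Omega> by blast
  hence pos: "0 < f ((\<sigma> *\<^sub>R g) *v d)" unfolding scale by (auto simp: \<sigma>_def)
  have "(\<sigma> *\<^sub>R g) *v v \<in> D" if "v \<in> D" for v
    by (rule D_linear_image[OF in_\<Omega> d pos that])
  thus thesis by (rule that[OF \<sigma>])
qed

lemma matrix_inv_preserves_D:
  assumes g: "g \<in> G" "\<And>v. v \<in> D \<Longrightarrow> g *v v \<in> D" and v: "v \<in> D"
  shows "matrix_inv g *v v \<in> D"
proof (rule D_linear_image)
  show "matrix_inv g *v u \<in> \<Omega>" if "u \<in> D" for u
    using G_maps_\<Omega>[OF G_matrix_inv[OF g(1)]] that D_subset_\<Omega> by blast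
  show "0 < f (matrix_inv g *v (g *v v))"
    using matrix_inv_cancel(1)[OF G_invertible[OF g(1)]] v by (simp add: D_def)
qed (use g(2) v in auto)

end

section \<open>Rescaled limits of the stabilizer\<close>

text \<open>The map of the theorem: \<open>T\<close> is a limit of rescaled elements of \<open>G\<close> that push a convergent
  sequence of \<open>C\<close> towards \<open>x\<close>.\<close>

locale face_limit = stabilizer_chart \<Omega> C f f' G for \<Omega> C :: "(real^'n) set" and f f' G +
  fixes x p :: "real^'n" and t s :: "nat \<Rightarrow> real" and h :: "nat \<Rightarrow> real^'n^'n"
    and \<kappa> :: "nat \<Rightarrow> real^'n" and T :: "real^'n^'n" and k :: "real^'n"
  assumes x: "x \<in> closure C" "x \<in> closure D" "x \<noteq> 0" "x \<notin> C"
    and p: "p \<in> C" "p \<in> D"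
    and t: "\<And>n. 0 < t n" "\<And>n. t n < 1" "t \<longlonglongrightarrow> 0"
    and h: "\<And>n. h n \<in> G" "\<And>n v. v \<in> D \<Longrightarrow> h n *v v \<in> D"
    and h_\<kappa>: "\<And>n. h n *v \<kappa> n = (1 - t n) *\<^sub>R x + t n *\<^sub>R p"
    and s: "\<And>n. 0 < s n" and lim_T: "(\<lambda>n. s n *\<^sub>R h n) \<longlonglongrightarrow> T"
    and lim_\<kappa>: "\<kappa> \<longlonglongrightarrow> k" and T_nonzero: "T \<noteq> 0" and k_in_C: "k \<in> C"
begin

definition approx :: "real^'n \<Rightarrow> nat \<Rightarrow> real^'n" where
  "approx y n = (1 - t n) *\<^sub>R y + t n *\<^sub>R p"

lemma approx_tendsto: "approx y \<longlonglongrightarrow> y"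
proof -
  have "(\<lambda>n. (1 - t n) *\<^sub>R y + t n *\<^sub>R p) \<longlonglongrightarrow> (1 - 0) *\<^sub>R y + 0 *\<^sub>R p"
    by (intro tendsto_intros t(3))
  thus ?thesis by (simp add: approx_def[abs_def])
qed

lemma approx_in_D: "y \<in> closure D \<Longrightarrow> approx y n \<in> D"
  using D_add_closure_D[OF D_scaleR[OF p(2) t(1)] closure_D_scaleR[of y "1 - t n"]] t(2)[of n]
  by (simp add: approx_def add.commute)

lemma approx_in_C: "y \<in> closure (C \<inter> D) \<Longrightarrow> approx y n \<in> C"
  using C_D_combination[OF _ p, of y "1 - t n" "t n"] t(1,2)[of n] by (simp add: approx_def)

lemma matrix_inv_h: "matrix_inv (h n) *v (h n *v v) = v" "h n *v (matrix_inv (h n) *v v) = v"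
  using matrix_inv_cancel G_invertible[OF h(1)] by blast+

text \<open>For \<open>y\<close> comparable with \<open>x\<close>, the pullbacks stay comparable with \<open>\<kappa>\<^sub>n\<close> with constants
  independent of \<open>n\<close>; this is what makes them accumulate at \<open>T\<close>-preimages of \<open>\<rho> y\<close>.\<close>

definition pullback :: "real^'n \<Rightarrow> nat \<Rightarrow> real^'n" where
  "pullback y n = matrix_inv (h n) *v approx y n"

lemma \<kappa>_eq_pullback: "\<kappa> n = pullback x n"
  using matrix_inv_h(1)[of n "\<kappa> n"] by (simp add: pullback_def h_\<kappa> approx_def)

lemma matrix_inv_h_closure_D: "v \<in> closure D \<Longrightarrow> matrix_inv (h n) *v v \<in> closure D"
  using closure_D_linear_image matrix_inv_preserves_D[OF h] closure_subset by blast

lemma pullback_in_D: "y \<in> closure D \<Longrightarrow> pullback y n \<in> D"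
  unfolding pullback_def by (intro matrix_inv_preserves_D h approx_in_D)

lemma k_in_D: "k \<in> D"
proof -
  have "k \<in> closure D"
    unfolding closure_sequential using lim_\<kappa> x(2)
    by (intro exI[of _ \<kappa>]) (simp add: \<kappa>_eq_pullback pullback_in_D)
  thus ?thesis using k_in_C C_subset_\<Omega> closure_D_Int_\<Omega> by blast
qed

lemma T_in_closure_G: "T \<in> closure G"
  unfolding closure_sequential using lim_T G_scaleR h(1) s
  by (intro exI[of _ "\<lambda>n. s n *\<^sub>R h n"]) (simp add: less_imp_neq[symmetric])

lemma T_maps_D: "v \<in> D \<Longrightarrow> T *v v \<in> closure D"
  unfolding closure_sequential using tendsto_matrix_vector_mult[OF lim_T tendsto_const, of v] h(2) s
  by (intro exI[of _ "\<lambda>n. (s n *\<^sub>R h n) *v v"]) (simp add: scaleR_matrix_vector_assoc[symmetric] D_scaleR)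

lemma T_nonzero_\<Omega>:
  assumes "v \<in> \<Omega>"
  shows "T *v v \<noteq> 0"
proof -
  consider "v \<in> D" | "- v \<in> D" using mem_\<Omega>_iff assms by blast
  thus ?thesis
    using linear_image_D_nonzero[OF T_nonzero T_maps_D, of v]
      linear_image_D_nonzero[OF T_nonzero T_maps_D, of "- v"] by cases (auto simp: vec.neg)
qed

definition \<rho> :: real where "\<rho> = norm (T *v k) / norm x"

lemma \<rho>_pos: "0 < \<rho>"
  using linear_image_D_nonzero[OF T_nonzero T_maps_D k_in_D] x(3) by (simp add: \<rho>_def)

lemma s_tendsto: "s \<longlonglongrightarrow> \<rho>"
  and T_k: "T *v k = \<rho> *\<^sub>R x"
proof -
  have scaled: "(s n *\<^sub>R h n) *v \<kappa> n = s n *\<^sub>R approx x n" for n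
    by (simp add: scaleR_matrix_vector_assoc[symmetric] h_\<kappa> approx_def)
  have lim: "(\<lambda>n. s n *\<^sub>R approx x n) \<longlonglongrightarrow> T *v k"
    using tendsto_matrix_vector_mult[OF lim_T lim_\<kappa>] unfolding scaled .
  have "approx x n \<noteq> 0" for n
    using approx_in_D[OF x(2), of n] D_subset_\<Omega> zero_notin_\<Omega> by auto
  hence "(\<lambda>n. norm (s n *\<^sub>R approx x n) / norm (approx x n)) = s"
    using s by (intro ext) (simp add: abs_of_pos)
  moreover have "(\<lambda>n. norm (s n *\<^sub>R approx x n) / norm (approx x n)) \<longlonglongrightarrow> \<rho>"
    unfolding \<rho>_def by (rule tendsto_divide[OF tendsto_norm[OF lim] tendsto_norm[OF approx_tendsto]])
      (use x(3) in simp)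
  ultimately show s_lim: "s \<longlonglongrightarrow> \<rho>" by simp
  have "(\<lambda>n. s n *\<^sub>R approx x n) \<longlonglongrightarrow> \<rho> *\<^sub>R x" by (rule tendsto_scaleR[OF s_lim approx_tendsto])
  from LIMSEQ_unique[OF lim this] show "T *v k = \<rho> *\<^sub>R x" .
qed

lemma approx_dominated:
  assumes "1 \<le> M" "M *\<^sub>R y - z \<in> closure D"
  shows "M *\<^sub>R approx y n - approx z n \<in> closure D"
proof -
  have "M *\<^sub>R approx y n - approx z n = (1 - t n) *\<^sub>R (M *\<^sub>R y - z) + (t n * (M - 1)) *\<^sub>R p"
    by (simp add: approx_def algebra_simps)
  also have "\<dots> \<in> closure D"
    using t(1,2)[of n] assms p(2) closure_subset
    by (intro closure_D_add closure_D_scaleR) auto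
  finally show ?thesis .
qed

lemma pullback_upper:
  assumes "1 \<le> M" "M *\<^sub>R x - y \<in> closure D"
  shows "M *\<^sub>R \<kappa> n - pullback y n \<in> closure D"
proof -
  have "M *\<^sub>R \<kappa> n - pullback y n = matrix_inv (h n) *v (M *\<^sub>R approx x n - approx y n)"
    by (simp add: \<kappa>_eq_pullback pullback_def matrix_vector_mult_diff_distrib matrix_vector_mult_scaleR)
  thus ?thesis using matrix_inv_h_closure_D approx_dominated[OF assms] by simp
qed

lemma pullback_lower:
  assumes "1 \<le> M" "M *\<^sub>R y - x \<in> closure D"
  shows "pullback y n - (1 / M) *\<^sub>R \<kappa> n \<in> closure D"
proof -
  have "pullback y n - (1 / M) *\<^sub>R \<kappa> n
      = (1 / M) *\<^sub>R (matrix_inv (h n) *v (M *\<^sub>R approx y n - approx x n))"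
    using assms(1) by (simp add: \<kappa>_eq_pullback pullback_def matrix_vector_mult_diff_distrib
      matrix_vector_mult_scaleR algebra_simps)
  thus ?thesis using matrix_inv_h_closure_D approx_dominated[OF assms] closure_D_scaleR assms(1) by simp
qed

lemma bounded_pullback:
  assumes y: "y \<in> closure D" and M: "1 \<le> M" "M *\<^sub>R x - y \<in> closure D"
  shows "bounded (range (pullback y))"
proof -
  obtain L where L: "L > 0" "\<And>u w M. u \<in> closure D \<Longrightarrow> M *\<^sub>R w - u \<in> closure D \<Longrightarrow> 0 \<le> M
      \<Longrightarrow> norm u \<le> L * M * norm w"
    using closure_D_dominated_norm_le by blast
  obtain B where B: "\<And>n. norm (\<kappa> n) \<le> B"
    using convergent_imp_bounded[OF lim_\<kappa>] unfolding bounded_iff by blast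
  have "M *\<^sub>R \<kappa> n - pullback y n \<in> closure D" for n by (rule pullback_upper[OF M])
  hence "norm (pullback y n) \<le> L * M * B" for n
    using L(2)[OF _ _, of "pullback y n" M "\<kappa> n"] pullback_in_D[OF y] closure_subset M(1) B[of n] L(1)
    by (smt (verit) mult_left_mono mult_nonneg_nonneg subsetD)
  thus ?thesis unfolding bounded_iff by blast
qed

lemma T_pullback_limit:
  assumes "strict_mono r" "(pullback y \<circ> r) \<longlonglongrightarrow> u"
  shows "T *v u = \<rho> *\<^sub>R y"
proof -
  have "(s n *\<^sub>R h n) *v pullback y n = s n *\<^sub>R approx y n" for n
    by (simp add: pullback_def matrix_inv_h scaleR_matrix_vector_assoc[symmetric])
  moreover have "(\<lambda>n. (s (r n) *\<^sub>R h (r n)) *v pullback y (r n)) \<longlonglongrightarrow> T *v u"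
    using tendsto_matrix_vector_mult[OF LIMSEQ_subseq_LIMSEQ[OF lim_T assms(1)] assms(2)]
    by (simp add: o_def)
  moreover have "(\<lambda>n. s (r n) *\<^sub>R approx y (r n)) \<longlonglongrightarrow> \<rho> *\<^sub>R y"
    using tendsto_scaleR[OF LIMSEQ_subseq_LIMSEQ[OF s_tendsto assms(1)]
      LIMSEQ_subseq_LIMSEQ[OF approx_tendsto assms(1)]] by (simp add: o_def)
  ultimately show ?thesis using LIMSEQ_unique by simp
qed

lemma T_preimage:
  assumes y: "y \<in> closure D" "comparable x y"
  obtains u where "u \<in> D" "T *v u = \<rho> *\<^sub>R y" "y \<in> closure (C \<inter> D) \<Longrightarrow> u \<in> C"
proof -
  obtain M where M: "1 \<le> M" "M *\<^sub>R x - y \<in> closure D" "M *\<^sub>R y - x \<in> closure D"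
    using y(2) unfolding comparable_def by blast
  obtain r u where r: "strict_mono r" "(pullback y \<circ> r) \<longlonglongrightarrow> u"
    using bounded_imp_convergent_subsequence[OF bounded_pullback[OF y(1) M(1,2)]] by blast
  have "(\<lambda>n. pullback y (r n) - (1 / M) *\<^sub>R \<kappa> (r n)) \<longlonglongrightarrow> u - (1 / M) *\<^sub>R k"
    using tendsto_diff[OF r(2) tendsto_scaleR[OF tendsto_const LIMSEQ_subseq_LIMSEQ[OF lim_\<kappa> r(1)]]]
    by (simp add: o_def)
  hence "u - (1 / M) *\<^sub>R k \<in> closure D"
    by (rule closed_sequentially[OF closed_closure, rotated]) (simp add: pullback_lower[OF M(1,3)])
  hence "(1 / M) *\<^sub>R k + (u - (1 / M) *\<^sub>R k) \<in> D"
    using M(1) by (intro D_add_closure_D D_scaleR[OF k_in_D]) simp_all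
  hence "u \<in> D" by simp
  moreover have "u \<in> C" if "y \<in> closure (C \<inter> D)"
  proof -
    have "pullback y n \<in> C" for n
      unfolding pullback_def using G_maps_C[OF G_matrix_inv[OF h(1)] approx_in_C[OF that]] .
    hence "u \<in> closure C"
      unfolding closure_sequential using r(2) by (intro exI[of _ "pullback y \<circ> r"]) simp
    thus ?thesis using \<open>u \<in> D\<close> D_subset_\<Omega> closure_C_Int_\<Omega> by blast
  qed
  ultimately show thesis using that T_pullback_limit[OF r] by blast
qed

lemma x_notin_\<Omega>: "x \<notin> \<Omega>"
  using x(1,4) closure_C_Int_\<Omega> by blast

lemma image_\<Omega>: "(\<lambda>v. T *v v) ` \<Omega> = open_face \<Omega> x"
proof
  have "(1 / \<rho>) *\<^sub>R k \<in> D" "T *v ((1 / \<rho>) *\<^sub>R k) = x"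
    using D_scaleR[OF k_in_D] \<rho>_pos T_k by (simp_all add: matrix_vector_mult_scaleR)
  thus "(\<lambda>v. T *v v) ` \<Omega> \<subseteq> open_face \<Omega> x"
    using linear_image_open_face[OF T_nonzero T_maps_D] by blast
  show "open_face \<Omega> x \<subseteq> (\<lambda>v. T *v v) ` \<Omega>"
  proof
    fix y assume "y \<in> open_face \<Omega> x"
    then obtain c y' where y': "y = c *\<^sub>R y'" "c \<noteq> 0" "y' \<in> closure D" "comparable x y'"
      using open_face_comparable[OF x(2,3)] by blast
    obtain u where u: "u \<in> D" "T *v u = \<rho> *\<^sub>R y'" using T_preimage[OF y'(3,4)] by blast
    have "T *v ((c / \<rho>) *\<^sub>R u) = y" using u(2) \<rho>_pos y'(1) by (simp add: matrix_vector_mult_scaleR)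
    moreover have "(c / \<rho>) *\<^sub>R u \<in> \<Omega>" using u(1) D_subset_\<Omega> scaleR_in_\<Omega> y'(2) \<rho>_pos by auto
    ultimately show "y \<in> (\<lambda>v. T *v v) ` \<Omega>" by blast
  qed
qed

lemma image_C: "(\<lambda>v. T *v v) ` C = open_face \<Omega> x \<inter> ideal_boundary C"
proof
  show "(\<lambda>v. T *v v) ` C \<subseteq> open_face \<Omega> x \<inter> ideal_boundary C"
  proof clarify
    fix v assume v: "v \<in> C"
    have face: "T *v v \<in> open_face \<Omega> x" using image_\<Omega> v C_subset_\<Omega> by blast
    hence "T *v v \<notin> \<Omega>" using open_face_disjoint_\<Omega> x(2,3) x_notin_\<Omega> by blast
    moreover have "T *v v \<in> closure C"
      using closure_G_image_C_subset[OF G_maps_C T_in_closure_G v] .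
    moreover have "T *v v \<noteq> 0" using T_nonzero_\<Omega> v C_subset_\<Omega> by blast
    moreover have "rel_interior C \<subseteq> \<Omega>" using rel_interior_subset C_subset_\<Omega> by blast
    ultimately show "T *v v \<in> open_face \<Omega> x \<inter> ideal_boundary C" using face C_subset_\<Omega>
      unfolding ideal_boundary_def proj_boundary_def proj_closure_def proj_relint_def by blast
  qed
  show "open_face \<Omega> x \<inter> ideal_boundary C \<subseteq> (\<lambda>v. T *v v) ` C"
  proof
    fix y assume "y \<in> open_face \<Omega> x \<inter> ideal_boundary C"
    hence y: "y \<in> open_face \<Omega> x" "y \<in> closure C" "y \<noteq> 0"
      unfolding ideal_boundary_def proj_boundary_def proj_closure_def by auto
    then obtain c y' where y': "y = c *\<^sub>R y'" "c \<noteq> 0" "y' \<in> closure D" "comparable x y'"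
      using open_face_comparable[OF x(2,3)] by blast
    have "y' \<in> closure C" using closure_C_scaleR[OF y(2), of "1 / c"] y'(1,2) by simp
    hence "y' \<in> closure (C \<inter> D)" using closure_C_Int_closure_D y'(1,3) y(3) by simp
    then obtain u where u: "u \<in> C" "T *v u = \<rho> *\<^sub>R y'" using T_preimage[OF y'(3,4)] by metis
    have "T *v ((c / \<rho>) *\<^sub>R u) = y" using u(2) \<rho>_pos y'(1) by (simp add: matrix_vector_mult_scaleR)
    moreover have "(c / \<rho>) *\<^sub>R u \<in> C" using u(1) scaleR_in_C y'(2) \<rho>_pos by auto
    ultimately show "y \<in> (\<lambda>v. T *v v) ` C" by blast
  qed
qed

end

context stabilizer_chart
begin

lemma cocompact_decomposition:
  assumes K: "C = {g *v k | g k. g \<in> G \<and> k \<in> K}" and v: "v \<in> C" and "D \<noteq> {}"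
  obtains h \<kappa> where "h \<in> G" "\<And>u. u \<in> D \<Longrightarrow> h *v u \<in> D" "\<kappa> \<in> K \<union> uminus ` K" "h *v \<kappa> = v"
proof -
  obtain g k where g: "g \<in> G" "k \<in> K" "v = g *v k" using K v by blast
  obtain \<sigma> where \<sigma>: "\<sigma> = 1 \<or> \<sigma> = -1" "\<And>u. u \<in> D \<Longrightarrow> (\<sigma> *\<^sub>R g) *v u \<in> D"
    using G_sign_preserves_D[OF g(1) assms(3)] by blast
  have "(\<sigma> *\<^sub>R g) *v (\<sigma> *\<^sub>R k) = v" "\<sigma> *\<^sub>R k \<in> K \<union> uminus ` K"
    using \<sigma>(1) g by (auto simp: matrix_vector_mult_scaleR scaleR_matrix_vector_assoc[symmetric])
  moreover have "\<sigma> \<noteq> 0" using \<sigma>(1) by auto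
  hence "\<sigma> *\<^sub>R g \<in> G" by (rule G_scaleR[OF g(1)])
  ultimately show thesis using that \<sigma>(2) by blast
qed

lemma cocompact_decomposition_seq:
  assumes K: "C = {g *v k | g k. g \<in> G \<and> k \<in> K}" and c: "\<And>n. c n \<in> C" and "D \<noteq> {}"
  obtains h \<kappa> where "\<And>n. h n \<in> G" "\<And>n u. u \<in> D \<Longrightarrow> h n *v u \<in> D"
    "\<And>n. \<kappa> n \<in> K \<union> uminus ` K" "\<And>n. h n *v \<kappa> n = c n"
proof -
  have "\<forall>n. \<exists>h\<kappa>. fst h\<kappa> \<in> G \<and> (\<forall>u\<in>D. fst h\<kappa> *v u \<in> D) \<and> snd h\<kappa> \<in> K \<union> uminus ` K \<and>
      fst h\<kappa> *v snd h\<kappa> = c n"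
  proof
    fix n
    obtain h \<kappa> where "h \<in> G" "\<And>u. u \<in> D \<Longrightarrow> h *v u \<in> D" "\<kappa> \<in> K \<union> uminus ` K" "h *v \<kappa> = c n"
      using cocompact_decomposition[OF K c assms(3)] by blast
    thus "\<exists>h\<kappa>. fst h\<kappa> \<in> G \<and> (\<forall>u\<in>D. fst h\<kappa> *v u \<in> D) \<and> snd h\<kappa> \<in> K \<union> uminus ` K \<and>
      fst h\<kappa> *v snd h\<kappa> = c n" by (intro exI[of _ "(h, \<kappa>)"]) simp
  qed
  then obtain H where "\<forall>n. fst (H n) \<in> G \<and> (\<forall>u\<in>D. fst (H n) *v u \<in> D) \<and>
      snd (H n) \<in> K \<union> uminus ` K \<and> fst (H n) *v snd (H n) = c n"
    by (rule choice[THEN exE])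
  thus thesis by (intro that[of "\<lambda>n. fst (H n)" "\<lambda>n. snd (H n)"]) auto
qed

lemma exists_face_limit:
  assumes K: "compact K" "K \<subseteq> C" "C = {g *v k | g k. g \<in> G \<and> k \<in> K}"
    and x: "x \<in> closure C" "x \<in> closure D" "x \<noteq> 0" "x \<notin> C" and p: "p \<in> C" "p \<in> D"
  obtains t s h \<kappa> T k where "face_limit \<Omega> C f f' G x p t s h \<kappa> T k"
proof -
  define t where "t n = inverse (real (Suc (Suc n)))" for n
  have t: "0 < t n" "t n < 1" for n by (auto simp: t_def inverse_less_1_iff)
  have approx_C: "(1 - t n) *\<^sub>R x + t n *\<^sub>R p \<in> C" for n
    using C_D_combination[OF closure_C_Int_closure_D[OF x(1-3)] p] t[of n] by simp
  obtain h \<kappa> where h: "\<And>n. h n \<in> G" "\<And>n u. u \<in> D \<Longrightarrow> h n *v u \<in> D"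
    and \<kappa>: "\<And>n. \<kappa> n \<in> K \<union> uminus ` K" "\<And>n. h n *v \<kappa> n = (1 - t n) *\<^sub>R x + t n *\<^sub>R p"
    by (rule cocompact_decomposition_seq[OF K(3), of "\<lambda>n. (1 - t n) *\<^sub>R x + t n *\<^sub>R p"])
      (use approx_C p(2) in auto)
  have "h n \<noteq> 0" for n
    using \<kappa>(2)[of n] approx_C[of n] C_subset_\<Omega> zero_notin_\<Omega> by auto
  hence norm_h: "0 < norm (h n)" for n by simp
  define F where "F n = (\<kappa> n, (1 / norm (h n)) *\<^sub>R h n)" for n
  have "compact ((K \<union> uminus ` K) \<times> sphere (0 :: real^'n^'n) 1)"
    using K(1) by (intro compact_Times compact_Un compact_negations compact_sphere)
  moreover have "F n \<in> (K \<union> uminus ` K) \<times> sphere 0 1" for n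
    using \<kappa>(1) norm_h[of n] by (simp add: F_def)
  ultimately have "\<exists>l \<in> (K \<union> uminus ` K) \<times> sphere 0 1. \<exists>r. strict_mono r \<and> (F \<circ> r) \<longlonglongrightarrow> l"
    unfolding compact_def by blast
  then obtain l r where l: "l \<in> (K \<union> uminus ` K) \<times> sphere 0 1" "strict_mono r" "(F \<circ> r) \<longlonglongrightarrow> l"
    by blast
  have "face_limit \<Omega> C f f' G x p (t \<circ> r) (\<lambda>n. 1 / norm (h (r n))) (h \<circ> r) (\<kappa> \<circ> r) (snd l) (fst l)"
  proof (intro face_limit.intro stabilizer_chart_axioms face_limit_axioms.intro)
    have "t \<longlonglongrightarrow> 0" unfolding t_def by (rule LIMSEQ_Suc[OF LIMSEQ_inverse_real_of_nat])
    thus "(t \<circ> r) \<longlonglongrightarrow> 0" using LIMSEQ_subseq_LIMSEQ l(2) by blast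
    show "(\<lambda>n. (1 / norm (h (r n))) *\<^sub>R (h \<circ> r) n) \<longlonglongrightarrow> snd l" "(\<kappa> \<circ> r) \<longlonglongrightarrow> fst l"
      using tendsto_snd[OF l(3)] tendsto_fst[OF l(3)] by (simp_all add: F_def o_def)
    show "snd l \<noteq> 0" "fst l \<in> C" using l(1) K(2) scaleR_in_C[of _ "-1"] by (auto simp: mem_Times_iff)
  qed (use x p t h \<kappa> norm_h in auto)
  thus thesis by (rule that)
qed

end

theorem mainTheorem7:
  fixes \<Omega> C :: "(real^'n) set" and G :: "(real^'n^'n) set" and x :: "real^'n"
  assumes "properly_convex_domain \<Omega>"
    and "C \<noteq> {}" and "C \<subseteq> \<Omega>" and "closedin (top_of_set \<Omega>) C" and "proj_convex C"
    and "in_stab G \<Omega> C"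
    and "cocompact G C"
    and "x \<in> ideal_boundary C"
  shows "\<exists>T \<in> closure G. T \<noteq> 0 \<and>
           (\<forall>v\<in>\<Omega>. T *v v \<noteq> 0) \<and>
           (\<lambda>v. T *v v) ` \<Omega> = open_face \<Omega> x \<and>
           (\<lambda>v. T *v v) ` C = open_face \<Omega> x \<inter> ideal_boundary C"
proof -
  obtain f where "properly_convex_chart \<Omega> f"
    using assms(1) unfolding properly_convex_domain_def in_chart_def properly_convex_chart_def by blast
  moreover obtain f' where "proj_set C" "linear f'" "\<forall>v\<in>C. f' v \<noteq> 0" "convex (chart f' ` C)"
    using assms(5) unfolding proj_convex_def in_chart_def by blast
  ultimately interpret stabilizer_chart \<Omega> C f f' G
    using assms(3,4,6) unfolding stabilizer_chart_def stabilizer_chart_axioms_def in_stab_def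
      convex_subset_chart_def convex_subset_chart_axioms_def by blast
  obtain x' where x': "x' \<in> closure C" "x' \<in> closure D" "x' \<noteq> 0" "x' \<notin> C"
      "open_face \<Omega> x' = open_face \<Omega> x"
    using ideal_boundary_lift[OF assms(8)] by blast
  obtain p where p: "p \<in> C" "p \<in> D" using C_Int_D_nonempty[OF assms(2)] by blast
  obtain K where K: "compact K" "K \<subseteq> C" "C = {g *v k | g k. g \<in> G \<and> k \<in> K}"
    using assms(7) unfolding cocompact_def by blast
  obtain t s h \<kappa> T k where "face_limit \<Omega> C f f' G x' p t s h \<kappa> T k"
    using exists_face_limit[OF K x'(1-4) p] by blast
  then interpret face_limit \<Omega> C f f' G x' p t s h \<kappa> T k .
  show ?thesis using T_in_closure_G T_nonzero T_nonzero_\<Omega> image_\<Omega> image_C x'(5) by auto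
qed

end
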